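(* Let $Q$ be a quantity space over a field $K$. Then every non-zero $u\in Q$ is a unit quantity (unit element) for its dimension $[u]$.
   Context: A scalable monoid over a (unital, associative) ring $R$ is a monoid $X$ (identity $1_X$, product written $xy$) together with a map $R\times X\to X$, $(\alpha,x)\mapsto\alpha\cdot x$, such that $1\cdot x=x$, $\alpha\cdot(\beta\cdot x)=\alpha\beta\cdot x$ and $\alpha\cdot(xy)=(\alpha\cdot x)y=x(\alpha\cdot y)$. A quantity space over a field $K$ is a commutative scalable monoid $Q$ over $K$ for which there exists a basis, i.e. a finite set $\{e_1,\ldots,e_n\}$ of invertible elements of $Q$ such that every $x\in Q$ has a unique expansion $x=\mu\cdot\prod_{i=1}^n e_i^{k_i}$ with $\mu\in K$ and $k_i\in\mathbb{Z}$. On $Q$, $x\sim y$ iff $\alpha\cdot x=\beta\cdot y$ for some $\alpha,\beta\in K$; the equivalence class $[x]$ is the dimension of $x$. An element $x$ is non-zero if $x\neq0\cdot x$. A unit element for a class $\mathsf{C}$ is some $u\in\mathsf{C}$ such that every $x\in\mathsf{C}$ equals $\lambda\cdot u$ for some $\lambda\in K$, and such that $\lambda\cdot u=\lambda'\cdot u$ implies $\lambda=\lambda'$. *)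

theory Defs
  imports Main
begin

definition scalable_monoid ::
  "('x \<Rightarrow> 'x \<Rightarrow> 'x) \<Rightarrow> 'x \<Rightarrow> ('r::ring_1 \<Rightarrow> 'x \<Rightarrow> 'x) \<Rightarrow> bool" where
  "scalable_monoid mul one smul \<longleftrightarrow>
     (\<forall>x y z. mul (mul x y) z = mul x (mul y z)) \<and>
     (\<forall>x. mul one x = x \<and> mul x one = x) \<and>
     (\<forall>x. smul 1 x = x) \<and>
     (\<forall>a b x. smul a (smul b x) = smul (a * b) x) \<and>
     (\<forall>a x y. smul a (mul x y) = mul (smul a x) y \<and> smul a (mul x y) = mul x (smul a y))"

definition invertible_el :: "('x \<Rightarrow> 'x \<Rightarrow> 'x) \<Rightarrow> 'x \<Rightarrow> 'x \<Rightarrow> bool" where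
  "invertible_el mul one x \<longleftrightarrow> (\<exists>y. mul x y = one \<and> mul y x = one)"

definition inverse_el :: "('x \<Rightarrow> 'x \<Rightarrow> 'x) \<Rightarrow> 'x \<Rightarrow> 'x \<Rightarrow> 'x" where
  "inverse_el mul one x = (THE y. mul x y = one \<and> mul y x = one)"

primrec npow :: "('x \<Rightarrow> 'x \<Rightarrow> 'x) \<Rightarrow> 'x \<Rightarrow> 'x \<Rightarrow> nat \<Rightarrow> 'x" where
  "npow mul one x 0 = one"
| "npow mul one x (Suc n) = mul x (npow mul one x n)"

definition zpow :: "('x \<Rightarrow> 'x \<Rightarrow> 'x) \<Rightarrow> 'x \<Rightarrow> 'x \<Rightarrow> int \<Rightarrow> 'x" where
  "zpow mul one x k =
     (if 0 \<le> k then npow mul one x (nat k)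
      else npow mul one (inverse_el mul one x) (nat (- k)))"

fun prod_pows :: "('x \<Rightarrow> 'x \<Rightarrow> 'x) \<Rightarrow> 'x \<Rightarrow> ('x \<times> int) list \<Rightarrow> 'x" where
  "prod_pows mul one [] = one"
| "prod_pows mul one ((e, k) # rest) = mul (zpow mul one e k) (prod_pows mul one rest)"

definition is_basis ::
  "('x \<Rightarrow> 'x \<Rightarrow> 'x) \<Rightarrow> 'x \<Rightarrow> ('k::field \<Rightarrow> 'x \<Rightarrow> 'x) \<Rightarrow> 'x list \<Rightarrow> bool" where
  "is_basis mul one smul es \<longleftrightarrow>
     distinct es \<and> (\<forall>e\<in>set es. invertible_el mul one e) \<and>
     (\<forall>x. \<exists>!(\<mu>, ks). length ks = length es \<and>
            x = smul \<mu> (prod_pows mul one (zip es ks)))"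

definition quantity_space ::
  "('x \<Rightarrow> 'x \<Rightarrow> 'x) \<Rightarrow> 'x \<Rightarrow> ('k::field \<Rightarrow> 'x \<Rightarrow> 'x) \<Rightarrow> bool" where
  "quantity_space mul one smul \<longleftrightarrow>
     scalable_monoid mul one smul \<and> (\<forall>x y. mul x y = mul y x) \<and>
     (\<exists>es. is_basis mul one smul es)"

definition dim_equiv :: "('k::field \<Rightarrow> 'x \<Rightarrow> 'x) \<Rightarrow> 'x \<Rightarrow> 'x \<Rightarrow> bool" where
  "dim_equiv smul x y \<longleftrightarrow> (\<exists>a b. smul a x = smul b y)"

definition dimension :: "('k::field \<Rightarrow> 'x \<Rightarrow> 'x) \<Rightarrow> 'x \<Rightarrow> 'x set" where
  "dimension smul x = {y. dim_equiv smul x y}"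

definition nonzero_el :: "('k::field \<Rightarrow> 'x \<Rightarrow> 'x) \<Rightarrow> 'x \<Rightarrow> bool" where
  "nonzero_el smul x \<longleftrightarrow> x \<noteq> smul 0 x"

definition unit_element :: "('k::field \<Rightarrow> 'x \<Rightarrow> 'x) \<Rightarrow> 'x set \<Rightarrow> 'x \<Rightarrow> bool" where
  "unit_element smul C u \<longleftrightarrow> u \<in> C \<and> (\<forall>x\<in>C. \<exists>c. x = smul c u) \<and>
     (\<forall>c c'. smul c u = smul c' u \<longrightarrow> c = c')"

end

theory Submission
  imports Defs
begin

text \<open>Write u = \<mu> \<cdot> m with m a monomial in the basis; u being non-zero forces \<mu> \<noteq> 0.
  Uniqueness of expansions shows that any x of the same dimension is a multiple of the same
  monomial m, hence x = (\<nu> / \<mu>) \<cdot> u, and that the scalar in front of m is determined, so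
  c \<cdot> u = c' \<cdot> u gives c \<mu> = c' \<mu>.\<close>

lemma scalable_monoid_smul_smul:
  assumes "scalable_monoid mul one smul"
  shows "smul a (smul b x) = smul (a * b) x"
  using assms unfolding scalable_monoid_def by blast

lemma quantity_space_scalable_monoid:
  "quantity_space mul one smul \<Longrightarrow> scalable_monoid mul one smul"
  unfolding quantity_space_def by blast

lemma quantity_space_obtain_basis:
  assumes "quantity_space mul one smul"
  obtains es where "is_basis mul one smul es"
  using assms unfolding quantity_space_def by blast

lemma is_basis_obtain_expansion:
  assumes "is_basis mul one smul es"
  obtains \<mu> ks where "length ks = length es" "x = smul \<mu> (prod_pows mul one (zip es ks))"
proof -
  have "\<exists>!(\<mu>, ks). length ks = length es \<and> x = smul \<mu> (prod_pows mul one (zip es ks))"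
    using assms unfolding is_basis_def by blast
  then show ?thesis
    using that by (auto simp: Ex1_def split: prod.splits)
qed

lemma is_basis_expansion_unique:
  assumes "is_basis mul one smul es"
    and "length ks = length es" and "length ks' = length es"
    and "smul \<mu> (prod_pows mul one (zip es ks)) = smul \<mu>' (prod_pows mul one (zip es ks'))"
  shows "\<mu> = \<mu>'" and "ks = ks'"
proof -
  let ?x = "smul \<mu> (prod_pows mul one (zip es ks))"
  have "\<exists>!(\<nu>, ls). length ls = length es \<and> ?x = smul \<nu> (prod_pows mul one (zip es ls))"
    using assms(1) unfolding is_basis_def by blast
  then have "(\<mu>, ks) = (\<mu>', ks')"
    using assms(2-4) unfolding Ex1_def by (smt (verit, best) case_prod_conv)
  then show "\<mu> = \<mu>'" and "ks = ks'" by simp_all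
qed

lemma nonzero_el_smul_imp_nonzero:
  assumes "scalable_monoid mul one smul" and "nonzero_el smul (smul \<mu> x)"
  shows "\<mu> \<noteq> 0"
proof
  assume "\<mu> = 0"
  then have "smul 0 (smul \<mu> x) = smul \<mu> x"
    using scalable_monoid_smul_smul[OF assms(1)] by simp
  then show False
    using assms(2) unfolding nonzero_el_def by simp
qed

lemma dim_equiv_same_exponents:
  assumes "scalable_monoid mul one smul" and "is_basis mul one smul es"
    and "dim_equiv smul x y"
    and "length ks = length es" "x = smul \<mu> (prod_pows mul one (zip es ks))"
    and "length ls = length es" "y = smul \<nu> (prod_pows mul one (zip es ls))"
  shows "ks = ls"
proof -
  obtain a b where "smul a x = smul b y"
    using assms(3) unfolding dim_equiv_def by blast
  then have "smul (a * \<mu>) (prod_pows mul one (zip es ks)) = smul (b * \<nu>) (prod_pows mul one (zip es ls))"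
    using assms(5,7) scalable_monoid_smul_smul[OF assms(1)] by simp
  then show ?thesis
    using is_basis_expansion_unique(2)[OF assms(2,4,6)] by blast
qed

lemma quantity_space_obtain_nonzero_expansion:
  assumes "quantity_space mul one smul" and "nonzero_el smul u"
  obtains es \<mu> ks where "is_basis mul one smul es" "length ks = length es"
    "u = smul \<mu> (prod_pows mul one (zip es ks))" "\<mu> \<noteq> 0"
proof -
  obtain es where B: "is_basis mul one smul es"
    using assms(1) by (rule quantity_space_obtain_basis)
  obtain \<mu> ks where "length ks = length es" and U: "u = smul \<mu> (prod_pows mul one (zip es ks))"
    using is_basis_obtain_expansion[OF B] by metis
  moreover have "\<mu> \<noteq> 0"
    using nonzero_el_smul_imp_nonzero[OF quantity_space_scalable_monoid[OF assms(1)]] assms(2) U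
    by blast
  ultimately show ?thesis
    using B that by simp
qed

lemma quantity_space_smul_cancel:
  assumes "quantity_space mul one smul" and "nonzero_el smul u"
    and "smul c u = smul c' u"
  shows "c = c'"
proof -
  have sm: "scalable_monoid mul one smul"
    using assms(1) by (rule quantity_space_scalable_monoid)
  obtain es \<mu> ks where B: "is_basis mul one smul es" and L: "length ks = length es"
    and U: "u = smul \<mu> (prod_pows mul one (zip es ks))" and "\<mu> \<noteq> 0"
    using assms(1,2) by (rule quantity_space_obtain_nonzero_expansion)
  moreover have "smul (c * \<mu>) (prod_pows mul one (zip es ks)) = smul (c' * \<mu>) (prod_pows mul one (zip es ks))"
    using assms(3) U scalable_monoid_smul_smul[OF sm] by simp
  then have "c * \<mu> = c' * \<mu>"
    using is_basis_expansion_unique(1)[OF B L L] by blast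
  ultimately show ?thesis by simp
qed

lemma quantity_space_dim_equiv_imp_multiple:
  assumes "quantity_space mul one smul" and "nonzero_el smul u"
    and "dim_equiv smul u x"
  shows "\<exists>c. x = smul c u"
proof -
  have sm: "scalable_monoid mul one smul"
    using assms(1) by (rule quantity_space_scalable_monoid)
  obtain es \<mu> ks where B: "is_basis mul one smul es" and L: "length ks = length es"
    and U: "u = smul \<mu> (prod_pows mul one (zip es ks))" and "\<mu> \<noteq> 0"
    using assms(1,2) by (rule quantity_space_obtain_nonzero_expansion)
  obtain \<nu> ls where L': "length ls = length es" and X: "x = smul \<nu> (prod_pows mul one (zip es ls))"
    using is_basis_obtain_expansion[OF B] by metis
  moreover have "ks = ls"
    using dim_equiv_same_exponents[OF sm B assms(3) L U L' X] .
  ultimately have "x = smul (\<nu> / \<mu>) u"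
    using \<open>\<mu> \<noteq> 0\<close> U scalable_monoid_smul_smul[OF sm] by simp
  then show ?thesis by blast
qed

theorem proposition3p7:
  fixes mul :: "'q \<Rightarrow> 'q \<Rightarrow> 'q" and one :: 'q and smul :: "'k::field \<Rightarrow> 'q \<Rightarrow> 'q"
  assumes "quantity_space mul one smul"
    and "nonzero_el smul u"
  shows "unit_element smul (dimension smul u) u"
proof -
  have "u \<in> dimension smul u"
    unfolding dimension_def dim_equiv_def by auto
  moreover have "\<exists>c. x = smul c u" if "x \<in> dimension smul u" for x
    using quantity_space_dim_equiv_imp_multiple[OF assms] that
    unfolding dimension_def by blast
  moreover have "c = c'" if "smul c u = smul c' u" for c c'
    using quantity_space_smul_cancel[OF assms that] .
  ultimately show ?thesis
    unfolding unit_element_def by blast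
qed

end
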